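(* Let $y_0\in\mathbb{R}$, $b>0$, $\epsilon>0$, and let $f:[y_0,\infty)\to\mathbb{R}$ be such that $p:=1/f$ is well defined and twice differentiable on $[y_0,\infty)$, with $f(y_0)>0$, $f'(y)>0$ and $p''(y)>0$ for all $y\ge y_0$. Assume $b<\int_{y_0}^{\infty}p(y)\,dy$ (possibly $+\infty$). For $h>0$ and integers $N\ge0$ define $$\Sigma_{l,h,N}=\sum_{i=1}^{N}h\,p(y_0+hi),\qquad \Sigma_{t,h,N}=\sum_{i=1}^{N}\frac h2\big(p(y_0+hi)+p(y_0+h(i-1))\big).$$ For each positive integer $j$ let $h^{(j)}=\epsilon/j$, let $n_2^{(j)}$ be the smallest positive integer $N$ with $\Sigma_{l,h^{(j)},N}\ge b$ (assume $n_2^{(1)}$ exists), and let $n_3^{(j)}$ be the largest integer $N\ge0$ with $\Sigma_{t,h^{(j)},N}\le b$. Assume $n_3^{(1)}\ge1$. If $j$ is a positive integer such that $\Sigma_{t,h^{(j)},\,n_2^{(j)}-j}\le b$ (i.e. Algorithm 1, which for $j=1,2,\dots$ stops at the first $j$ with this inequality, can stop at iteration $j$), then $$j>1+\frac12\cdot\frac{p(y_0)-p\big(y_0+h^{(1)}n_3^{(1)}-h^{(1)}\big)-2\,p\big(y_0+h^{(1)}n_3^{(1)}\big)}{2\,p\big(y_0+h^{(1)}n_3^{(1)}-h^{(1)}\big)}.$$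
   Context: $\Sigma_{l,h,N}$ and $\Sigma_{t,h,N}$ are the lower rectangular and trapezoidal sums with step $h$ for $\int_{y_0}^{y_0+hN}p(y)\,dy$; empty sums are $0$. Here $h^{(1)}=\epsilon$. *)

theory Defs
  imports "HOL-Analysis.Analysis"
begin

definition sigma_l :: "(real \<Rightarrow> real) \<Rightarrow> real \<Rightarrow> real \<Rightarrow> nat \<Rightarrow> real" where
  "sigma_l p y0 h N = (\<Sum>i = 1..N. h * p (y0 + h * real i))"

definition sigma_t :: "(real \<Rightarrow> real) \<Rightarrow> real \<Rightarrow> real \<Rightarrow> nat \<Rightarrow> real" where
  "sigma_t p y0 h N = (\<Sum>i = 1..N. h / 2 * (p (y0 + h * real i) + p (y0 + h * (real i - 1))))"

definition n2 :: "(real \<Rightarrow> real) \<Rightarrow> real \<Rightarrow> real \<Rightarrow> real \<Rightarrow> nat \<Rightarrow> nat" where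
  "n2 p y0 eps b j = (LEAST N. 0 < N \<and> sigma_l p y0 (eps / real j) N \<ge> b)"

definition n3 :: "(real \<Rightarrow> real) \<Rightarrow> real \<Rightarrow> real \<Rightarrow> real \<Rightarrow> nat \<Rightarrow> nat" where
  "n3 p y0 eps b j = (GREATEST N. sigma_t p y0 (eps / real j) N \<le> b)"

end

theory Submission
  imports Defs
begin

text \<open>Since \<open>f' > 0\<close> and \<open>p'' > 0\<close>, the function \<open>p = 1/f\<close> is positive, strictly decreasing
  and convex on \<open>[y0, \<infinity>)\<close>. By convexity every sample of the lower sum with step \<open>\<epsilon>/j\<close> lies
  below the chord of the coarse trapezoid containing it, so the refined lower sum over \<open>j n\<^sub>3\<close> steps
  stays strictly below the trapezoidal sum over \<open>n\<^sub>3\<close> steps of size \<open>\<epsilon>\<close>, hence below \<open>b\<close>; thus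
  \<open>n\<^sub>2 > j n\<^sub>3\<close>. If the algorithm stops at \<open>j\<close>, the lower sum up to \<open>n\<^sub>2\<close> reaches \<open>b\<close> while the
  trapezoidal sum up to \<open>m = n\<^sub>2 - j\<close> does not exceed it; comparing the last \<open>j\<close> rectangles with
  the trapezoidal correction gives \<open>p(y0) - p(y0 + h m) \<le> 2 j p(y0 + h (m + 1))\<close>. As \<open>y0 + h m\<close> lies
  beyond \<open>y0 + \<epsilon> (n\<^sub>3 - 1)\<close>, monotonicity of \<open>p\<close> turns this into the lower bound on \<open>j\<close>.\<close>

lemma mvt_within:
  fixes f f' :: "real \<Rightarrow> real"
  assumes S: "connected S"
    and der: "\<And>x. x \<in> S \<Longrightarrow> (f has_real_derivative f' x) (at x within S)"
    and ab: "a \<in> S" "b \<in> S" "a \<le> b"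
  shows "\<exists>\<xi>\<in>{a..b}. f b - f a = f' \<xi> * (b - a)"
proof -
  have sub: "{a..b} \<subseteq> S"
    using connected_contains_Icc[OF S ab(1,2)] .
  have "\<exists>\<xi>\<in>{a..b}. f b - f a = (\<lambda>t. f' \<xi> * t) (b - a)"
  proof (rule mvt_very_simple[OF \<open>a \<le> b\<close>])
    fix x assume "a \<le> x" "x \<le> b"
    with sub have "(f has_real_derivative f' x) (at x within {a..b})"
      by (intro DERIV_subset[OF der]) auto
    then show "(f has_derivative (\<lambda>t. f' x * t)) (at x within {a..b})"
      by (simp add: has_field_derivative_def)
  qed
  then show ?thesis by simp
qed

lemma has_real_derivative_pos_imp_strict_mono_on:
  fixes f f' :: "real \<Rightarrow> real"
  assumes S: "connected S"
    and der: "\<And>x. x \<in> S \<Longrightarrow> (f has_real_derivative f' x) (at x within S)"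
    and pos: "\<And>x. x \<in> S \<Longrightarrow> f' x > 0"
  shows "strict_mono_on S f"
proof (rule monotone_onI)
  fix x y assume xy: "x \<in> S" "y \<in> S" "x < y"
  then obtain \<xi> where "\<xi> \<in> {x..y}" "f y - f x = f' \<xi> * (y - x)"
    using mvt_within[OF S der, of x y] by auto
  moreover have "\<xi> \<in> S"
    using connected_contains_Icc[OF S xy(1,2)] calculation(1) by blast
  ultimately have "0 < f y - f x"
    using pos[of \<xi>] xy(3) by simp
  then show "f x < f y" by simp
qed

lemma has_real_derivative_mono_imp_convex_on:
  fixes f f' :: "real \<Rightarrow> real"
  assumes S: "connected S"
    and der: "\<And>x. x \<in> S \<Longrightarrow> (f has_real_derivative f' x) (at x within S)"
    and mono: "mono_on S f'"
  shows "convex_on S f"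
proof (rule convex_on_linorderI)
  show "convex S"
    using S by (metis is_interval_connected_1 is_interval_convex_1)
next
  fix t x y :: real
  assume t: "0 < t" "t < 1" and xy: "x \<in> S" "y \<in> S" "x < y"
  define z where "z = (1 - t) * x + t * y"
  have zx: "z - x = t * (y - x)" and yz: "y - z = (1 - t) * (y - x)"
    by (simp_all add: z_def algebra_simps)
  have "0 < t * (y - x)" "0 < (1 - t) * (y - x)"
    using t xy(3) by simp_all
  then have xz: "x < z" and zy: "z < y"
    by (simp_all only: zx [symmetric] yz [symmetric])
  have Ixy: "{x..y} \<subseteq> S"
    using connected_contains_Icc[OF S xy(1,2)] .
  then have z: "z \<in> S" using xz zy by auto
  obtain \<xi> where \<xi>: "\<xi> \<in> {x..z}" "f z - f x = f' \<xi> * (z - x)"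
    using mvt_within[OF S der xy(1) z] xz by auto
  obtain \<eta> where \<eta>: "\<eta> \<in> {z..y}" "f y - f z = f' \<eta> * (y - z)"
    using mvt_within[OF S der z xy(2)] zy by auto
  have "f' \<xi> \<le> f' z" "f' z \<le> f' \<eta>"
    using \<xi>(1) \<eta>(1) Ixy xz zy by (auto intro!: monotone_onD[OF mono])
  then have "f z - f x \<le> f' z * (z - x)" "f' z * (y - z) \<le> f y - f z"
    using \<xi>(2) \<eta>(2) xz zy by (auto intro: mult_right_mono)
  then have left: "f z - f x \<le> t * (f' z * (y - x))"
    and right: "(1 - t) * (f' z * (y - x)) \<le> f y - f z"
    by (simp_all add: zx yz mult.left_commute)
  have "(1 - t) * (f z - f x) \<le> (1 - t) * (t * (f' z * (y - x)))"
    using left t by (intro mult_left_mono) auto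
  also have "\<dots> = t * ((1 - t) * (f' z * (y - x)))"
    by (simp add: algebra_simps)
  also have "\<dots> \<le> t * (f y - f z)"
    using right t by (intro mult_left_mono) auto
  finally show "f ((1 - t) *\<^sub>R x + t *\<^sub>R y) \<le> (1 - t) * f x + t * f y"
    by (simp add: z_def algebra_simps)
qed

lemma sum_right_points_less_trapezoid:
  fixes p :: "real \<Rightarrow> real" and j :: nat
  assumes conv: "convex_on {x..x + d} p" and dec: "p (x + d) < p x"
    and j: "0 < j" and d: "0 < d"
  shows "(\<Sum>k=1..j. d / j * p (x + d / j * k)) < d / 2 * (p x + p (x + d))"
proof -
  have "p (x + d / j * k) \<le> (1 - k / j) * p x + k / j * p (x + d)" if "k \<in> {1..j}" for k
  proof -
    have "p ((1 - k / j) *\<^sub>R x + (k / j) *\<^sub>R (x + d)) \<le> (1 - k / j) * p x + k / j * p (x + d)"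
      using that d by (intro convex_onD[OF conv]) auto
    moreover have "(1 - k / j) *\<^sub>R x + (k / j) *\<^sub>R (x + d) = x + d / j * k"
      using j by (simp add: field_simps)
    ultimately show ?thesis by simp
  qed
  then have "(\<Sum>k=1..j. d / j * p (x + d / j * k))
      \<le> (\<Sum>k=1..j. d / j * ((1 - k / j) * p x + k / j * p (x + d)))"
    using d by (intro sum_mono mult_left_mono) auto
  also have "\<dots> = (\<Sum>k=1..j. d * p x / j + d / j ^ 2 * (p (x + d) - p x) * k)"
    using j by (intro sum.cong) (simp_all add: field_simps power2_eq_square)
  also have "\<dots> = d * p x + d / j ^ 2 * (p (x + d) - p x) * (\<Sum>k=1..j. real k)"
    using j by (simp add: sum.distrib sum_distrib_left)
  also have "\<dots> = d / 2 * (p x + p (x + d)) + d / (2 * j) * (p (x + d) - p x)"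
  proof -
    have gauss: "(\<Sum>k=1..j. real k) = j * (j + 1) / 2"
      using double_gauss_sum_from_Suc_0[of j, where 'a = real] by (simp add: algebra_simps)
    show ?thesis
      unfolding gauss using j by (simp add: field_simps power2_eq_square)
  qed
  also have "\<dots> < d / 2 * (p x + p (x + d))"
    using dec d j by (simp add: mult_pos_neg divide_neg_pos)
  finally show ?thesis .
qed

lemma right_rectangle_le_sum_right_points:
  fixes p :: "real \<Rightarrow> real" and j :: nat
  assumes anti: "antimono_on {x..x + d} p" and j: "0 < j" and d: "0 \<le> d"
  shows "d * p (x + d) \<le> (\<Sum>k=1..j. d / j * p (x + d / j * k))"
proof -
  have "p (x + d) \<le> p (x + d / j * k)" if "k \<in> {1..j}" for k
  proof -
    have "d / j * k \<le> d"
      using that d by (simp add: field_simps mult_left_mono)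
    then show ?thesis
      using d j by (intro monotone_onD[OF anti]) auto
  qed
  then have "(\<Sum>k=1..j. d / j * p (x + d)) \<le> (\<Sum>k=1..j. d / j * p (x + d / j * k))"
    using d by (intro sum_mono mult_left_mono) auto
  then show ?thesis
    using j by simp
qed

lemma sigma_l_eq_sum_lessThan: "sigma_l p y0 h m = (\<Sum>i<m. h * p (y0 + h * real i + h))"
  by (induction m) (simp_all add: sigma_l_def algebra_simps)

lemma sigma_t_eq_sum_lessThan:
  "sigma_t p y0 h m = (\<Sum>i<m. h / 2 * (p (y0 + h * real i) + p (y0 + h * real i + h)))"
  by (induction m) (simp_all add: sigma_t_def algebra_simps)

lemma sigma_t_eq_sigma_l: "sigma_t p y0 h m = sigma_l p y0 h m + h / 2 * (p y0 - p (y0 + h * m))"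
  by (induction m) (simp_all add: sigma_t_def sigma_l_def field_simps)

lemma sigma_l_add:
  "sigma_l p y0 h (m + n) = sigma_l p y0 h m + (\<Sum>k=1..n. h * p (y0 + h * real (m + k)))"
  by (induction n) (simp_all add: sigma_l_def add_ac)

lemma sigma_l_mono:
  assumes "\<And>y. y \<ge> y0 \<Longrightarrow> p y \<ge> 0" and "0 \<le> h" and "m \<le> n"
  shows "sigma_l p y0 h m \<le> sigma_l p y0 h n"
proof -
  have "0 \<le> (\<Sum>k=1..n - m. h * p (y0 + h * real (m + k)))"
    using assms(1,2) by (intro sum_nonneg) simp
  then show ?thesis
    using sigma_l_add[of p y0 h m "n - m"] \<open>m \<le> n\<close> by simp
qed

lemma sigma_l_refine:
  assumes "0 < j"
  shows "sigma_l p y0 (eps / j) (j * m) = (\<Sum>i<m. \<Sum>k=1..j. eps / j * p (y0 + eps * real i + eps / j * real k))"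
proof (induction m)
  case (Suc m)
  have "y0 + eps / j * real (j * m + k) = y0 + eps * real m + eps / j * real k" for k
    using assms by (simp add: field_simps)
  then have "(\<Sum>k=1..j. eps / j * p (y0 + eps / j * real (j * m + k)))
      = (\<Sum>k=1..j. eps / j * p (y0 + eps * real m + eps / j * real k))"
    by (simp only:)
  moreover have "sigma_l p y0 (eps / j) (j * Suc m)
      = sigma_l p y0 (eps / j) (j * m) + (\<Sum>k=1..j. eps / j * p (y0 + eps / j * real (j * m + k)))"
    using sigma_l_add[of p y0 "eps / j" "j * m" j] by (simp add: add.commute)
  ultimately show ?case
    using Suc by simp
qed (simp add: sigma_l_def)

lemma sigma_l_le_sigma_l_refine:
  assumes anti: "antimono_on {y0..} p" and "0 < j" and "0 \<le> eps"
  shows "sigma_l p y0 eps m \<le> sigma_l p y0 (eps / j) (j * m)"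
  unfolding sigma_l_refine[OF \<open>0 < j\<close>] unfolding sigma_l_eq_sum_lessThan
proof (rule sum_mono)
  fix i
  have "antimono_on {y0 + eps * real i..y0 + eps * real i + eps} p"
    using \<open>0 \<le> eps\<close> by (intro monotone_on_subset[OF anti]) auto
  then show "eps * p (y0 + eps * real i + eps)
      \<le> (\<Sum>k=1..j. eps / j * p (y0 + eps * real i + eps / j * real k))"
    using assms(2,3) by (rule right_rectangle_le_sum_right_points)
qed

lemma sigma_l_refine_less_sigma_t:
  assumes conv: "convex_on {y0..} p" and dec: "strict_antimono_on {y0..} p"
    and "0 < j" "0 < eps" "0 < m"
  shows "sigma_l p y0 (eps / j) (j * m) < sigma_t p y0 eps m"
  unfolding sigma_l_refine[OF \<open>0 < j\<close>] sigma_t_eq_sum_lessThan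
proof (rule sum_strict_mono)
  fix i
  let ?x = "y0 + eps * real i"
  have "convex_on {?x..?x + eps} p"
    using \<open>0 < eps\<close> by (intro convex_on_subset[OF conv]) auto
  moreover have "p (?x + eps) < p ?x"
    using \<open>0 < eps\<close> by (intro monotone_onD[OF dec]) auto
  ultimately show "(\<Sum>k=1..j. eps / j * p (?x + eps / j * real k)) < eps / 2 * (p ?x + p (?x + eps))"
    using assms(3,4) by (rule sum_right_points_less_trapezoid)
qed (use \<open>0 < m\<close> in auto)

lemma sigma_l_n2:
  assumes "\<exists>N. 0 < N \<and> b \<le> sigma_l p y0 (eps / j) N"
  shows "b \<le> sigma_l p y0 (eps / j) (n2 p y0 eps b j)"
  using LeastI_ex[OF assms] unfolding n2_def by blast

lemma sigma_t_n3:
  fixes j :: nat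
  assumes pos: "\<And>y. y \<ge> y0 \<Longrightarrow> 0 \<le> p y" and dec: "strict_antimono_on {y0..} p"
    and "0 < eps" "0 < j" "0 \<le> b"
    and N: "0 < N" "b \<le> sigma_l p y0 (eps / j) N"
  shows "sigma_t p y0 (eps / j) (n3 p y0 eps b j) \<le> b"
  unfolding n3_def
proof (rule GreatestI_nat)
  let ?h = "eps / j"
  have h: "0 < ?h" using assms(3,4) by simp
  show "sigma_t p y0 ?h 0 \<le> b"
    using \<open>0 \<le> b\<close> by (simp add: sigma_t_def)
  show "M \<le> N" if M: "sigma_t p y0 ?h M \<le> b" for M
  proof (rule ccontr)
    assume "\<not> M \<le> N"
    then have "N \<le> M" "0 < M" using N(1) by auto
    then have "b \<le> sigma_l p y0 ?h M"
      using N(2) sigma_l_mono[of y0 p ?h N M] pos h by simp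
    moreover have "p (y0 + ?h * M) < p y0"
      using \<open>0 < M\<close> assms(3,4) by (intro monotone_onD[OF dec]) auto
    then have "0 < ?h / 2 * (p y0 - p (y0 + ?h * M))"
      using h by (intro mult_pos_pos) simp_all
    ultimately have "b < sigma_t p y0 ?h M"
      unfolding sigma_t_eq_sigma_l by linarith
    then show False using M by simp
  qed
qed

lemma refined_index_less:
  fixes j m n :: nat
  assumes conv: "convex_on {y0..} p" and dec: "strict_antimono_on {y0..} p"
    and pos: "\<And>y. y \<ge> y0 \<Longrightarrow> 0 \<le> p y"
    and "0 < eps" "0 < j" "0 < m"
    and upper: "sigma_t p y0 eps m \<le> b" and lower: "b \<le> sigma_l p y0 (eps / j) n"
  shows "j * m < n"
proof (rule ccontr)
  assume "\<not> j * m < n"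
  then have "sigma_l p y0 (eps / j) n \<le> sigma_l p y0 (eps / j) (j * m)"
    using assms(4,5) by (intro sigma_l_mono[OF pos]) auto
  also have "\<dots> < sigma_t p y0 eps m"
    using sigma_l_refine_less_sigma_t[OF conv dec assms(5,4,6)] .
  finally show False
    using upper lower by simp
qed

lemma tail_bound_of_stopping:
  assumes anti: "antimono_on {y0..} p" and h: "0 < h"
    and lower: "b \<le> sigma_l p y0 h (m + j)" and upper: "sigma_t p y0 h m \<le> b"
  shows "p y0 - p (y0 + h * m) \<le> 2 * real j * p (y0 + h * (real m + 1))"
proof -
  have "(\<Sum>k=1..j. h * p (y0 + h * real (m + k))) \<le> (\<Sum>k=1..j. h * p (y0 + h * (real m + 1)))"
    using h by (intro sum_mono mult_left_mono monotone_onD[OF anti]) auto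
  also have "\<dots> = h * (j * p (y0 + h * (real m + 1)))"
    by simp
  finally have "h / 2 * (p y0 - p (y0 + h * m)) \<le> h * (j * p (y0 + h * (real m + 1)))"
    using lower upper sigma_l_add[of p y0 h m j] sigma_t_eq_sigma_l[of p y0 h m] by linarith
  then have "h * (p y0 - p (y0 + h * m)) \<le> h * (2 * real j * p (y0 + h * (real m + 1)))"
    by (simp add: algebra_simps)
  then show ?thesis
    using h by (simp only: mult_le_cancel_left_pos)
qed

lemma stopping_index_lower_bound:
  fixes p :: "real \<Rightarrow> real" and y0 eps :: real and j m n :: nat
  assumes dec: "strict_antimono_on {y0..} p" and pos: "\<And>y. y \<ge> y0 \<Longrightarrow> 0 < p y"
    and eps: "0 < eps" and j: "0 < j" and n: "1 \<le> n" and mn: "j * n < m + j"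
    and tail: "p y0 - p (y0 + eps / j * m) \<le> 2 * real j * p (y0 + eps / j * (real m + 1))"
  shows "real j > 1 + 1/2 * ((p y0 - p (y0 + eps * n - eps) - 2 * p (y0 + eps * n))
                            / (2 * p (y0 + eps * n - eps)))"
proof -
  define h where "h = eps / j"
  define q where "q = p (y0 + eps * n - eps)"
  define r where "r = p (y0 + eps * n)"
  define u where "u = p (y0 + h * m)"
  define v where "v = p (y0 + h * (real m + 1))"
  have h: "0 < h" "h * j = eps"
    using eps j by (simp_all add: h_def)
  have y0_le: "y0 \<le> y0 + eps * n - eps"
    using n eps by (simp add: mult_le_cancel_left1)
  have "real (j * n) + 1 \<le> real m + j"
    using mn by linarith
  then have "h * (real (j * n) + 1) \<le> h * (real m + j)"
    using h by (intro mult_left_mono) auto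
  moreover have "h * real (j * n) = eps * n"
    using h(2) by (metis mult.assoc of_nat_mult)
  ultimately have hm: "y0 + eps * n - eps < y0 + h * m"
    using h unfolding distrib_left mult_1_right by linarith
  have "0 < q" "0 < r"
    using pos y0_le eps by (simp_all add: q_def r_def)
  have uq: "u < q"
    unfolding u_def q_def using y0_le hm by (intro monotone_onD[OF dec]) auto
  have vu: "v < u"
    unfolding u_def v_def using y0_le hm h by (intro monotone_onD[OF dec]) (auto simp: algebra_simps)
  have key: "p y0 - u \<le> 2 * real j * v"
    using tail by (simp add: u_def v_def h_def)
  have "p y0 - q - 2 * r < 2 * (real j - 1) * (2 * q)"
  proof (cases "j = 1")
    case True
    then have "real n < real m + 1" "h = eps"
      using mn h(2) by simp_all
    then have "eps * n < h * (real m + 1)"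
      using eps by simp
    then have "v < r"
      unfolding v_def r_def using y0_le eps h(1) by (intro monotone_onD[OF dec]) auto
    then show ?thesis using key uq True by simp
  next
    case False
    then have "2 \<le> real j" using j by simp
    have "2 * real j * v \<le> 2 * real j * u" "2 * real j * u \<le> 2 * real j * q"
      using vu uq by (simp_all add: mult_left_mono)
    then have "p y0 < q + 2 * real j * q"
      using key uq by linarith
    moreover have "2 * real j * q \<le> 2 * (real j - 1) * 2 * q"
      using \<open>2 \<le> real j\<close> \<open>0 < q\<close> by (intro mult_right_mono) auto
    ultimately show ?thesis
      using \<open>0 < r\<close> by (simp add: algebra_simps)
  qed
  then show ?thesis
    using \<open>0 < q\<close> by (simp add: q_def r_def field_simps)
qed

theorem theorem2:
  fixes f f' p p' p'' :: "real \<Rightarrow> real" and y0 b eps :: real and j :: nat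
  assumes b_pos: "b > 0" and eps_pos: "eps > 0"
    and p_def: "\<And>y. y \<ge> y0 \<Longrightarrow> p y = 1 / f y"
    and f_nz: "\<And>y. y \<ge> y0 \<Longrightarrow> f y \<noteq> 0"
    and f_deriv: "\<And>y. y \<ge> y0 \<Longrightarrow> (f has_real_derivative f' y) (at y within {y0..})"
    and p_deriv: "\<And>y. y \<ge> y0 \<Longrightarrow> (p has_real_derivative p' y) (at y within {y0..})"
    and p'_deriv: "\<And>y. y \<ge> y0 \<Longrightarrow> (p' has_real_derivative p'' y) (at y within {y0..})"
    and f_y0: "f y0 > 0"
    and f'_pos: "\<And>y. y \<ge> y0 \<Longrightarrow> f' y > 0"
    and p''_pos: "\<And>y. y \<ge> y0 \<Longrightarrow> p'' y > 0"
    and b_lt_int: "ennreal b < set_nn_integral lborel {y0..} (\<lambda>y. ennreal (p y))"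
    and n2_1_ex: "\<exists>N. 0 < N \<and> sigma_l p y0 eps N \<ge> b"
    and n3_1_ge: "n3 p y0 eps b 1 \<ge> 1"
    and j_pos: "j > 0"
    and stop: "sigma_t p y0 (eps / real j) (n2 p y0 eps b j - j) \<le> b"
  shows "real j > 1 + 1/2 * ((p y0 - p (y0 + eps * real (n3 p y0 eps b 1) - eps)
              - 2 * p (y0 + eps * real (n3 p y0 eps b 1)))
            / (2 * p (y0 + eps * real (n3 p y0 eps b 1) - eps)))"
proof -
  have f_mono: "strict_mono_on {y0..} f"
    using f_deriv f'_pos by (intro has_real_derivative_pos_imp_strict_mono_on) auto
  have f_pos: "0 < f y" if "y0 \<le> y" for y
    using f_y0 monotone_onD[OF f_mono, of y0 y] that by (cases "y = y0") auto
  have p_pos: "\<And>y. y0 \<le> y \<Longrightarrow> 0 < p y"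
    using p_def f_pos by simp
  then have p_nonneg: "\<And>y. y0 \<le> y \<Longrightarrow> 0 \<le> p y"
    by (simp add: less_imp_le)
  have p_dec: "strict_antimono_on {y0..} p"
    by (rule monotone_onI) (simp add: p_def f_pos frac_less2 monotone_onD[OF f_mono])
  have p_conv: "convex_on {y0..} p"
    using p_deriv p'_deriv p''_pos
    by (intro has_real_derivative_mono_imp_convex_on strict_mono_on_imp_mono_on
        has_real_derivative_pos_imp_strict_mono_on) auto
  obtain N where N: "0 < N" "b \<le> sigma_l p y0 eps N"
    using n2_1_ex by auto
  then have "b \<le> sigma_l p y0 (eps / j) (j * N)"
    using sigma_l_le_sigma_l_refine[of y0 p j eps N] p_dec j_pos eps_pos
    by (simp add: strict_antimono_iff_antimono)
  then have n2: "b \<le> sigma_l p y0 (eps / j) (n2 p y0 eps b j)"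
    using N(1) j_pos by (intro sigma_l_n2 exI[of _ "j * N"]) auto
  have n3: "sigma_t p y0 eps (n3 p y0 eps b 1) \<le> b"
    using sigma_t_n3[OF p_nonneg p_dec eps_pos, of 1 b N] b_pos N by simp
  have "j * n3 p y0 eps b 1 < n2 p y0 eps b j"
    using n3_1_ge by (intro refined_index_less[OF p_conv p_dec p_nonneg eps_pos j_pos _ n3 n2]) auto
  moreover obtain m where m: "n2 p y0 eps b j = m + j"
    using calculation n3_1_ge by (metis le_add_diff_inverse2 le_trans less_imp_le mult_le_mono2 mult.right_neutral)
  moreover have "p y0 - p (y0 + eps / j * m) \<le> 2 * real j * p (y0 + eps / j * (real m + 1))"
    using p_dec eps_pos j_pos n2 stop unfolding m
    by (intro tail_bound_of_stopping) (auto simp: strict_antimono_iff_antimono)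
  ultimately show ?thesis
    by (intro stopping_index_lower_bound[OF p_dec p_pos eps_pos j_pos n3_1_ge]) simp_all
qed

end
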